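(* Consider an execution $\gamma_0\gamma_1\ldots$ of the unison dynamics with $\gamma_0$ satisfying $WU_0$, and let $\bot_0$, $\widetilde{p^t.r}$, $t_{p,k}$ be as in the context. Let $k\ge\bot_0+D$ be an integer and let $(p,t)$ be an event such that $t_{p,k}$ is defined and $t\ge t_{p,k}$. Then $V\big(p,\widetilde{p^t.r}-k\big)\subseteq Cover(p,t)$.
   Context: Let $G=(V,E)$ be a finite connected undirected graph, $|V|=n\ge 2$, $\mathcal N_p$ the set of neighbors of $p$, $d(p,q)$ the hop distance, $D$ the diameter, and $V(p,r)=\{q\in V: d(p,q)\le r\}$. Fix an integer $M\ge 3$; for an integer $a$, $\bar a\in\{0,\dots,M-1\}$ denotes its residue modulo $M$. Each process $p$ holds a clock $p.r\in\{0,\dots,M-1\}$; $p^t.r$ denotes its value in configuration $\gamma_t$. Integers $a,b$ are locally comparable if $\min(\overline{a-b},\overline{b-a})\le 1$, and then $b\ominus a=\overline{b-a}$ if $\overline{b-a}\le 1$, and $b\ominus a=-\overline{a-b}$ otherwise. A configuration satisfies $WU$ if for every edge $\{p,q\}$, $p.r$ and $q.r$ are locally comparable. The delay of a path $\mu=p_0p_1\ldots p_k$ is $\delta_\mu=\sum_{i=0}^{k-1}(p_{i+1}.r\ominus p_i.r)$ ($0$ if $k=0$). A configuration satisfies $WU_0$ if it satisfies $WU$ and the delay is intrinsic: for all $p,q$, all paths from $p$ to $q$ have the same delay, denoted $\delta_{(p,q)}$ ($\delta^t_{(p,q)}$ in $\gamma_t$). Dynamics: a process $p$ is enabled iff for every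 $q\in\mathcal N_p$, $q.r=p.r$ or $q.r=\overline{p.r+1}$. In a transition $\gamma_t\to\gamma_{t+1}$ a nonempty set of processes enabled in $\gamma_t$ is chosen (by an arbitrary, possibly unfair, daemon) and each of them sets $p.r:=\overline{p.r+1}$; other clocks are unchanged. Events: $(p,0)$ is an event for every $p$; $(p,t+1)$ is an event iff $p$ increments in $\gamma_t\to\gamma_{t+1}$. Causal relation $\leadsto$: for an event $(p,t)$ with $t>0$, $(p,t')\leadsto(p,t)$ where $t'$ is the largest time $<t$ such that $(p,t')$ is an event, and for each $q\in\mathcal N_p$, $(q,t')\leadsto(p,t)$ where $t'$ is the largest time $<t$ such that $(q,t')$ is an event. $\preceq$ is the reflexive–transitive closure of $\leadsto$. $Cover(p,t)$ is the set of processes $q$ such that some event $(q,t')$ satisfies $(q,t')\preceq(p,t)$. Lifting: assume $\gamma_0$ satisfies $WU_0$. Choose $p_0$ with $\delta^0_{(p_0,q)}\ge 0$ for all $q\in V$, and let $\bot_0=p_0^0.r$. Define integers $\widetilde{p^t.r}$ by $\widetilde{p^0.r}=\bot_0+\delta^0_{(p_0,p)}$, and $\widetilde{p^{t+1}.r}=\widetilde{p^t.r}+1$ if $p$ increments in $\gamma_t\to\gamma_{t+1}$, $\widetilde{p^{t+1}.r}=\widetilde{p^t.r}$ otherwise. For an integer $k$, $t_{p,k}$ is the smallest $t$ with $\widetilde{p^t.r}=k$. *)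

theory Defs
  imports Main
begin

definition graph :: "'v set \<Rightarrow> ('v \<Rightarrow> 'v \<Rightarrow> bool) \<Rightarrow> bool" where
  "graph V E \<longleftrightarrow> finite V \<and> (\<forall>p q. E p q \<longrightarrow> p \<in> V \<and> q \<in> V) \<and>
     (\<forall>p q. E p q \<longrightarrow> E q p) \<and> (\<forall>p. \<not> E p p)"

definition nbrs :: "('v \<Rightarrow> 'v \<Rightarrow> bool) \<Rightarrow> 'v \<Rightarrow> 'v set" where
  "nbrs E p = {q. E p q}"

definition is_path :: "'v set \<Rightarrow> ('v \<Rightarrow> 'v \<Rightarrow> bool) \<Rightarrow> 'v \<Rightarrow> 'v \<Rightarrow> 'v list \<Rightarrow> bool" where
  "is_path V E p q xs \<longleftrightarrow> xs \<noteq> [] \<and> set xs \<subseteq> V \<and> successively E xs \<and> hd xs = p \<and> last xs = q"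

definition connected_graph :: "'v set \<Rightarrow> ('v \<Rightarrow> 'v \<Rightarrow> bool) \<Rightarrow> bool" where
  "connected_graph V E \<longleftrightarrow> (\<forall>p\<in>V. \<forall>q\<in>V. \<exists>xs. is_path V E p q xs)"

definition hop_dist :: "'v set \<Rightarrow> ('v \<Rightarrow> 'v \<Rightarrow> bool) \<Rightarrow> 'v \<Rightarrow> 'v \<Rightarrow> nat" where
  "hop_dist V E p q = (LEAST k. \<exists>xs. is_path V E p q xs \<and> length xs = Suc k)"

definition diameter :: "'v set \<Rightarrow> ('v \<Rightarrow> 'v \<Rightarrow> bool) \<Rightarrow> nat" where
  "diameter V E = Max {hop_dist V E p q | p q. p \<in> V \<and> q \<in> V}"

text \<open>V(p,r) for an integer radius r (empty if r < 0).\<close>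
definition ball_set :: "'v set \<Rightarrow> ('v \<Rightarrow> 'v \<Rightarrow> bool) \<Rightarrow> 'v \<Rightarrow> int \<Rightarrow> 'v set" where
  "ball_set V E p r = {q \<in> V. int (hop_dist V E p q) \<le> r}"

type_synonym 'v config = "'v \<Rightarrow> int"

definition loc_comp :: "int \<Rightarrow> int \<Rightarrow> int \<Rightarrow> bool" where
  "loc_comp M a b \<longleftrightarrow> min ((a - b) mod M) ((b - a) mod M) \<le> 1"

definition ominus :: "int \<Rightarrow> int \<Rightarrow> int \<Rightarrow> int" where
  "ominus M b a = (if (b - a) mod M \<le> 1 then (b - a) mod M else - ((a - b) mod M))"

definition WU :: "int \<Rightarrow> ('v \<Rightarrow> 'v \<Rightarrow> bool) \<Rightarrow> 'v config \<Rightarrow> bool" where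
  "WU M E c \<longleftrightarrow> (\<forall>p q. E p q \<longrightarrow> loc_comp M (c p) (c q))"

definition delay :: "int \<Rightarrow> 'v config \<Rightarrow> 'v list \<Rightarrow> int" where
  "delay M c xs = sum_list (map (\<lambda>(a, b). ominus M (c b) (c a)) (zip xs (tl xs)))"

definition WU0 :: "int \<Rightarrow> 'v set \<Rightarrow> ('v \<Rightarrow> 'v \<Rightarrow> bool) \<Rightarrow> 'v config \<Rightarrow> bool" where
  "WU0 M V E c \<longleftrightarrow> WU M E c \<and>
     (\<forall>p q xs ys. is_path V E p q xs \<longrightarrow> is_path V E p q ys \<longrightarrow> delay M c xs = delay M c ys)"

text \<open>Intrinsic delay \<delta>_(p,q) (meaningful under WU0 and connectivity).\<close>
definition idelay :: "int \<Rightarrow> 'v set \<Rightarrow> ('v \<Rightarrow> 'v \<Rightarrow> bool) \<Rightarrow> 'v config \<Rightarrow> 'v \<Rightarrow> 'v \<Rightarrow> int" where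
  "idelay M V E c p q = (THE d. \<exists>xs. is_path V E p q xs \<and> delay M c xs = d)"

definition enabled :: "int \<Rightarrow> ('v \<Rightarrow> 'v \<Rightarrow> bool) \<Rightarrow> 'v config \<Rightarrow> 'v \<Rightarrow> bool" where
  "enabled M E c p \<longleftrightarrow> (\<forall>q \<in> nbrs E p. c q = c p \<or> c q = (c p + 1) mod M)"

definition step :: "int \<Rightarrow> 'v set \<Rightarrow> ('v \<Rightarrow> 'v \<Rightarrow> bool) \<Rightarrow> 'v config \<Rightarrow> 'v config \<Rightarrow> bool" where
  "step M V E c c' \<longleftrightarrow> (\<exists>S. S \<noteq> {} \<and> S \<subseteq> V \<and> (\<forall>p\<in>S. enabled M E c p) \<and>
      c' = (\<lambda>p. if p \<in> S then (c p + 1) mod M else c p))"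

definition execution :: "int \<Rightarrow> 'v set \<Rightarrow> ('v \<Rightarrow> 'v \<Rightarrow> bool) \<Rightarrow> (nat \<Rightarrow> 'v config) \<Rightarrow> bool" where
  "execution M V E \<gamma> \<longleftrightarrow> (\<forall>p\<in>V. 0 \<le> \<gamma> 0 p \<and> \<gamma> 0 p < M) \<and> (\<forall>t. step M V E (\<gamma> t) (\<gamma> (Suc t)))"

text \<open>p increments in \<gamma>_t \<rightarrow> \<gamma>_(t+1) (M \<ge> 3, so incrementing changes the clock).\<close>
definition incr :: "(nat \<Rightarrow> 'v config) \<Rightarrow> nat \<Rightarrow> 'v \<Rightarrow> bool" where
  "incr \<gamma> t p \<longleftrightarrow> \<gamma> (Suc t) p \<noteq> \<gamma> t p"

definition is_event :: "(nat \<Rightarrow> 'v config) \<Rightarrow> 'v \<Rightarrow> nat \<Rightarrow> bool" where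
  "is_event \<gamma> p t \<longleftrightarrow> t = 0 \<or> (\<exists>s. t = Suc s \<and> incr \<gamma> s p)"

definition last_event :: "(nat \<Rightarrow> 'v config) \<Rightarrow> 'v \<Rightarrow> nat \<Rightarrow> nat" where
  "last_event \<gamma> q t = (GREATEST t'. t' < t \<and> is_event \<gamma> q t')"

definition leadsto :: "('v \<Rightarrow> 'v \<Rightarrow> bool) \<Rightarrow> (nat \<Rightarrow> 'v config) \<Rightarrow> 'v \<times> nat \<Rightarrow> 'v \<times> nat \<Rightarrow> bool" where
  "leadsto E \<gamma> e e' \<longleftrightarrow> (case e of (q, t') \<Rightarrow> case e' of (p, t) \<Rightarrow>
      0 < t \<and> is_event \<gamma> p t \<and> (q = p \<or> q \<in> nbrs E p) \<and> t' = last_event \<gamma> q t)"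

definition causal_le :: "('v \<Rightarrow> 'v \<Rightarrow> bool) \<Rightarrow> (nat \<Rightarrow> 'v config) \<Rightarrow> 'v \<times> nat \<Rightarrow> 'v \<times> nat \<Rightarrow> bool" where
  "causal_le E \<gamma> = (leadsto E \<gamma>)\<^sup>*\<^sup>*"

definition Cover :: "'v set \<Rightarrow> ('v \<Rightarrow> 'v \<Rightarrow> bool) \<Rightarrow> (nat \<Rightarrow> 'v config) \<Rightarrow> 'v \<Rightarrow> nat \<Rightarrow> 'v set" where
  "Cover V E \<gamma> p t = {q \<in> V. \<exists>t'. is_event \<gamma> q t' \<and> causal_le E \<gamma> (q, t') (p, t)}"

text \<open>lifted M V E \<gamma> p0 p t = the integer \<widetilde>{p^t.r}, with \<bottom>_0 = \<gamma> 0 p0.\<close>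
definition lifted :: "int \<Rightarrow> 'v set \<Rightarrow> ('v \<Rightarrow> 'v \<Rightarrow> bool) \<Rightarrow> (nat \<Rightarrow> 'v config) \<Rightarrow> 'v \<Rightarrow> 'v \<Rightarrow> nat \<Rightarrow> int" where
  "lifted M V E \<gamma> p0 p t = \<gamma> 0 p0 + idelay M V E (\<gamma> 0) p0 p + int (card {s. s < t \<and> incr \<gamma> s p})"

definition t_first :: "int \<Rightarrow> 'v set \<Rightarrow> ('v \<Rightarrow> 'v \<Rightarrow> bool) \<Rightarrow> (nat \<Rightarrow> 'v config) \<Rightarrow> 'v \<Rightarrow> 'v \<Rightarrow> int \<Rightarrow> nat" where
  "t_first M V E \<gamma> p0 p k = (LEAST t. lifted M V E \<gamma> p0 p t = k)"

end

theory Submission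
  imports Defs
begin

(*
  Lift every clock to an integer L p t (the function lifted):
  L p 0 = bot_0 + delta_(p0,p) and L grows by one at every increment.  Two invariants
  hold along the execution:  the real clock is L reduced modulo M, and neighbours'
  lifted clocks differ by at most one.  Hence an enabled process is never ahead of a
  neighbour, so when p increments at time t the last event (q',t') of any neighbour
  q' before t has L q' t' >= L p t - 1.  Moreover L q 0 <= bot_0 + D for every q.
  The theorem then follows by strong induction on t: a vertex q at distance d+1
  <= L p t - k from p is reached through the neighbour q' on a shortest path, since
  q is at distance <= d <= L q' t' - k from q' and (q',t') causally precedes (p,t).
*)

section \<open>Clock arithmetic modulo M\<close>

text \<open>A multiple of \<open>M \<ge> 3\<close> of absolute value at most 2 is zero; this pins down
  lifted values from their residues.\<close>
lemma multiple_small_eq_0: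
  fixes M d :: int
  assumes "M \<ge> 3" "\<bar>d\<bar> \<le> 2" "M dvd d"
  shows "d = 0"
proof (rule ccontr)
  assume "d \<noteq> 0"
  then have "\<bar>M\<bar> \<le> \<bar>d\<bar>" using dvd_imp_le_int[of d M] assms(3) by blast
  then show False using assms(1,2) by linarith
qed

lemma dvd_mod_diff: "(M::int) dvd x mod M - x"
  using mod_eq_dvd_iff[of "x mod M" M x] by simp

lemma ominus_cong: "M dvd ominus M b a - (b - a)"
proof (cases "(b - a) mod M \<le> 1")
  case True
  then show ?thesis using dvd_mod_diff[of M "b - a"] by (simp add: ominus_def)
next
  case False
  have "- ((a - b) mod M) - (b - a) = - ((a - b) mod M - (a - b))" by simp
  then have "M dvd - ((a - b) mod M) - (b - a)"
    using dvd_mod_diff[of M "a - b"] by (simp only: dvd_minus_iff)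
  then show ?thesis using False by (simp add: ominus_def)
qed

lemma ominus_le_1:
  assumes "M > 0"
  shows "ominus M b a \<le> 1"
proof -
  have "0 \<le> (a - b) mod M" using assms by simp
  then show ?thesis by (simp add: ominus_def)
qed

lemma ominus_ge_minus_1:
  assumes "M > 0" "loc_comp M a b"
  shows "ominus M b a \<ge> -1"
proof -
  have "0 \<le> (a - b) mod M" "0 \<le> (b - a) mod M" using assms(1) by simp_all
  then show ?thesis
    using assms(2) unfolding ominus_def loc_comp_def by (auto simp: min_def split: if_splits)
qed

lemma delay_singleton [simp]: "delay M c [a] = 0"
  by (simp add: delay_def)

lemma delay_Cons2 [simp]:
  "delay M c (a # b # rest) = ominus M (c b) (c a) + delay M c (b # rest)"
  by (simp add: delay_def)

lemma delay_snoc: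
  "xs \<noteq> [] \<Longrightarrow> delay M c (xs @ [y]) = delay M c xs + ominus M (c y) (c (last xs))"
proof (induction xs rule: induct_list012)
  case (3 a b rest)
  then show ?case by simp
qed simp_all

lemma delay_cong: "xs \<noteq> [] \<Longrightarrow> M dvd delay M c xs - (c (last xs) - c (hd xs))"
proof (induction xs rule: induct_list012)
  case (3 a b rest)
  have "delay M c (a # b # rest) - (c (last (a # b # rest)) - c (hd (a # b # rest)))
      = (ominus M (c b) (c a) - (c b - c a)) + (delay M c (b # rest) - (c (last (b # rest)) - c b))"
    by simp
  moreover have "M dvd delay M c (b # rest) - (c (last (b # rest)) - c b)"
    using 3 by simp
  ultimately show ?case using ominus_cong[of M "c b" "c a"] by (simp only: dvd_add)
qed simp_all

lemma delay_le_length: "M > 0 \<Longrightarrow> xs \<noteq> [] \<Longrightarrow> delay M c xs \<le> int (length xs) - 1"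
proof (induction xs rule: induct_list012)
  case (3 a b rest)
  then show ?case using ominus_le_1[of M "c b" "c a"] by simp
qed simp_all

text \<open>An enabled process p whose clock is within one of a neighbour's (in lifted values
  a, b) is not ahead of that neighbour: its neighbour shows either the same clock or one more.\<close>
lemma enabled_not_ahead:
  assumes "M \<ge> 3" "c p = a mod M" "c q = b mod M" "\<bar>a - b\<bar> \<le> 1"
    and "enabled M E c p" "E p q"
  shows "a \<le> b"
proof -
  have "c q = c p \<or> c q = (c p + 1) mod M"
    using assms(5,6) by (auto simp: enabled_def nbrs_def)
  then consider "b mod M = a mod M" | "b mod M = (a + 1) mod M"
    using assms(2,3) by (auto simp: mod_add_left_eq)
  then show ?thesis
  proof cases
    case 1
    then have "M dvd b - a" by (simp add: mod_eq_dvd_iff)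
    moreover have "\<bar>b - a\<bar> \<le> 2" using assms(4) by linarith
    ultimately have "b - a = 0" by (rule multiple_small_eq_0[OF assms(1), rotated])
    then show ?thesis by simp
  next
    case 2
    then have "M dvd b - (a + 1)" by (simp add: mod_eq_dvd_iff)
    moreover have "\<bar>b - (a + 1)\<bar> \<le> 2" using assms(4) by linarith
    ultimately have "b - (a + 1) = 0" by (rule multiple_small_eq_0[OF assms(1), rotated])
    then show ?thesis by simp
  qed
qed

section \<open>Paths and hop distance\<close>

lemma is_path_snoc:
  "is_path V E p q xs \<Longrightarrow> E q y \<Longrightarrow> y \<in> V \<Longrightarrow> is_path V E p y (xs @ [y])"
  by (auto simp: is_path_def successively_append_iff)

lemma hop_dist_le_length: "is_path V E p q xs \<Longrightarrow> hop_dist V E p q \<le> length xs - 1"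
  unfolding hop_dist_def by (rule Least_le) (auto simp: is_path_def)

lemma shortest_path_exists:
  assumes "connected_graph V E" "p \<in> V" "q \<in> V"
  shows "\<exists>xs. is_path V E p q xs \<and> length xs = Suc (hop_dist V E p q)"
proof -
  obtain xs where "is_path V E p q xs" using assms by (auto simp: connected_graph_def)
  then have "\<exists>k xs. is_path V E p q xs \<and> length xs = Suc k"
    by (intro exI[of _ "length xs - 1"] exI[of _ xs]) (auto simp: is_path_def)
  then show ?thesis unfolding hop_dist_def by (rule LeastI_ex)
qed

lemma hop_dist_eq_0:
  "connected_graph V E \<Longrightarrow> p \<in> V \<Longrightarrow> q \<in> V \<Longrightarrow> hop_dist V E p q = 0 \<Longrightarrow> p = q"
  using shortest_path_exists[of V E p q] by (auto simp: is_path_def length_Suc_conv)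

lemma hop_dist_next:
  assumes "connected_graph V E" "p \<in> V" "q \<in> V" "hop_dist V E p q = Suc n"
  obtains q' where "E p q'" "q' \<in> V" "hop_dist V E q' q \<le> n"
proof -
  obtain xs where xs: "is_path V E p q xs" "length xs = Suc (Suc n)"
    using shortest_path_exists[OF assms(1-3)] assms(4) by metis
  then obtain q' rest where xs_eq: "xs = p # q' # rest"
    by (auto simp: is_path_def length_Suc_conv)
  have "is_path V E q' q (q' # rest)" using xs xs_eq by (auto simp: is_path_def)
  then have "hop_dist V E q' q \<le> n" using hop_dist_le_length xs(2) xs_eq by fastforce
  moreover have "E p q'" "q' \<in> V" using xs xs_eq by (auto simp: is_path_def)
  ultimately show ?thesis using that by blast
qed

lemma hop_dist_le_diameter:
  assumes "finite V" "p \<in> V" "q \<in> V"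
  shows "hop_dist V E p q \<le> diameter V E"
proof -
  have "{hop_dist V E p q | p q. p \<in> V \<and> q \<in> V} = (\<lambda>(p, q). hop_dist V E p q) ` (V \<times> V)"
    by auto
  then have "finite {hop_dist V E p q | p q. p \<in> V \<and> q \<in> V}" using assms(1) by simp
  then show ?thesis unfolding diameter_def by (rule Max_ge) (use assms in auto)
qed

section \<open>Causality\<close>

lemma last_event_props:
  assumes "0 < t"
  shows "last_event \<gamma> q t < t" "is_event \<gamma> q (last_event \<gamma> q t)"
    and "\<And>u. is_event \<gamma> q u \<Longrightarrow> u < t \<Longrightarrow> u \<le> last_event \<gamma> q t"
proof -
  have "last_event \<gamma> q t < t \<and> is_event \<gamma> q (last_event \<gamma> q t)"
    unfolding last_event_def
    by (rule GreatestI_nat[where P = "\<lambda>u. u < t \<and> is_event \<gamma> q u" and b = t])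
      (use assms in \<open>auto simp: is_event_def\<close>)
  then show "last_event \<gamma> q t < t" "is_event \<gamma> q (last_event \<gamma> q t)" by auto
  show "\<And>u. is_event \<gamma> q u \<Longrightarrow> u < t \<Longrightarrow> u \<le> last_event \<gamma> q t"
    unfolding last_event_def by (rule Greatest_le_nat[of _ _ t]) auto
qed

lemma no_incr_after_last_event:
  assumes "last_event \<gamma> q (Suc s) \<le> u" "u < s"
  shows "\<not> incr \<gamma> u q"
proof
  assume "incr \<gamma> u q"
  then have "is_event \<gamma> q (Suc u)" by (simp add: is_event_def)
  then have "Suc u \<le> last_event \<gamma> q (Suc s)"
    using last_event_props(3)[of "Suc s" \<gamma> q "Suc u"] assms(2) by simp
  then show False using assms(1) by simp
qed

lemma Cover_refl: "p \<in> V \<Longrightarrow> is_event \<gamma> p t \<Longrightarrow> p \<in> Cover V E \<gamma> p t"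
  by (auto simp: Cover_def causal_le_def)

lemma Cover_leadsto:
  "leadsto E \<gamma> (q, t') (p, t) \<Longrightarrow> Cover V E \<gamma> q t' \<subseteq> Cover V E \<gamma> p t"
  unfolding Cover_def causal_le_def by (auto intro: rtranclp.rtrancl_into_rtrancl)

section \<open>Lifted clocks along an execution\<close>

locale unison_execution =
  fixes V :: "'v set" and E :: "'v \<Rightarrow> 'v \<Rightarrow> bool" and M :: int
    and \<gamma> :: "nat \<Rightarrow> 'v config" and p0 :: 'v
  assumes graph: "graph V E" and connected: "connected_graph V E" and M_ge_3: "M \<ge> 3"
    and execution: "execution M V E \<gamma>" and WU0: "WU0 M V E (\<gamma> 0)" and p0_in_V: "p0 \<in> V"
begin

abbreviation L :: "'v \<Rightarrow> nat \<Rightarrow> int" where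
  "L q t \<equiv> lifted M V E \<gamma> p0 q t"

lemma M_pos: "M > 0"
  using M_ge_3 by simp

lemma edge_in_V: "E p q \<Longrightarrow> p \<in> V \<and> q \<in> V"
  using graph by (auto simp: graph_def)

lemma idelay_eq: "is_path V E p0 q xs \<Longrightarrow> idelay M V E (\<gamma> 0) p0 q = delay M (\<gamma> 0) xs"
proof -
  assume xs: "is_path V E p0 q xs"
  then have "\<And>ys. is_path V E p0 q ys \<Longrightarrow> delay M (\<gamma> 0) ys = delay M (\<gamma> 0) xs"
    using WU0 unfolding WU0_def by blast
  then show ?thesis unfolding idelay_def using xs by (intro the_equality) blast+
qed

lemma lifted_init: "is_path V E p0 q xs \<Longrightarrow> L q 0 = \<gamma> 0 p0 + delay M (\<gamma> 0) xs"
  by (simp add: lifted_def idelay_eq)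

lemma incr_step:
  assumes "incr \<gamma> t p"
  shows "enabled M E (\<gamma> t) p" "\<gamma> (Suc t) p = (\<gamma> t p + 1) mod M"
proof -
  obtain S where "\<forall>p\<in>S. enabled M E (\<gamma> t) p"
      "\<gamma> (Suc t) = (\<lambda>p. if p \<in> S then (\<gamma> t p + 1) mod M else \<gamma> t p)"
    using execution unfolding execution_def step_def by blast
  with assms show "enabled M E (\<gamma> t) p" "\<gamma> (Suc t) p = (\<gamma> t p + 1) mod M"
    by (auto simp: incr_def split: if_splits)
qed

lemma lifted_Suc: "L q (Suc t) = L q t + (if incr \<gamma> t q then 1 else 0)"
proof (cases "incr \<gamma> t q")
  case True
  then have "{s. s < Suc t \<and> incr \<gamma> s q} = insert t {s. s < t \<and> incr \<gamma> s q}"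
    by (auto simp: less_Suc_eq)
  then show ?thesis using True by (simp add: lifted_def)
next
  case False
  then have "{s. s < Suc t \<and> incr \<gamma> s q} = {s. s < t \<and> incr \<gamma> s q}"
    by (auto simp: less_Suc_eq)
  then show ?thesis using False by (simp add: lifted_def)
qed

lemma lifted_const:
  "m \<le> n \<Longrightarrow> (\<And>u. m \<le> u \<Longrightarrow> u < n \<Longrightarrow> \<not> incr \<gamma> u q) \<Longrightarrow> L q n = L q m"
proof (induction n)
  case (Suc n)
  then show ?case by (cases "m = Suc n") (simp_all add: lifted_Suc)
qed simp

lemma lifted_init_le: "q \<in> V \<Longrightarrow> L q 0 \<le> \<gamma> 0 p0 + int (diameter V E)"
proof -
  assume q: "q \<in> V"
  obtain xs where xs: "is_path V E p0 q xs" "length xs = Suc (hop_dist V E p0 q)"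
    using shortest_path_exists[OF connected p0_in_V q] by blast
  have "xs \<noteq> []" using xs(1) by (simp add: is_path_def)
  then have "delay M (\<gamma> 0) xs \<le> int (length xs) - 1"
    by (rule delay_le_length[OF M_pos])
  moreover have "hop_dist V E p0 q \<le> diameter V E"
    using hop_dist_le_diameter graph p0_in_V q by (auto simp: graph_def)
  ultimately show ?thesis using lifted_init[OF xs(1)] xs(2) by simp
qed

lemma clock_eq_lifted_mod: "p \<in> V \<Longrightarrow> \<gamma> t p = L p t mod M"
proof (induction t)
  case 0
  obtain xs where xs: "is_path V E p0 p xs" using connected p0_in_V 0 by (auto simp: connected_graph_def)
  have "M dvd delay M (\<gamma> 0) xs - (\<gamma> 0 p - \<gamma> 0 p0)"
    using delay_cong[of xs M "\<gamma> 0"] xs by (auto simp: is_path_def)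
  moreover have "L p 0 - \<gamma> 0 p = delay M (\<gamma> 0) xs - (\<gamma> 0 p - \<gamma> 0 p0)"
    using lifted_init[OF xs] by simp
  ultimately have "L p 0 mod M = \<gamma> 0 p mod M"
    by (simp only: mod_eq_dvd_iff)
  moreover have "0 \<le> \<gamma> 0 p" "\<gamma> 0 p < M" using execution 0 by (auto simp: execution_def)
  ultimately show ?case by simp
next
  case (Suc t)
  then show ?case
    using incr_step(2)[of t p] lifted_Suc[of p t] by (auto simp: incr_def mod_add_left_eq)
qed

text \<open>The second invariant holds initially: by \<open>WU\<close> each edge adds a delay in \<open>[-1,1]\<close>.\<close>
lemma lifted_edge_init: "E p q \<Longrightarrow> \<bar>L p 0 - L q 0\<bar> \<le> 1"
proof -
  assume e: "E p q"
  then have pq: "p \<in> V" "q \<in> V" using edge_in_V by auto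
  obtain xs where xs: "is_path V E p0 p xs" using connected p0_in_V pq by (auto simp: connected_graph_def)
  have "delay M (\<gamma> 0) (xs @ [q]) = delay M (\<gamma> 0) xs + ominus M (\<gamma> 0 q) (\<gamma> 0 p)"
    using delay_snoc[of xs M "\<gamma> 0" q] xs by (auto simp: is_path_def)
  moreover have "loc_comp M (\<gamma> 0 p) (\<gamma> 0 q)" using WU0 e by (auto simp: WU0_def WU_def)
  ultimately show ?thesis
    using lifted_init[OF xs] lifted_init[OF is_path_snoc[OF xs e pq(2)]]
      ominus_le_1[OF M_pos, of "\<gamma> 0 q" "\<gamma> 0 p"] ominus_ge_minus_1[OF M_pos, of "\<gamma> 0 p" "\<gamma> 0 q"]
    by simp
qed

lemma incr_not_ahead:
  "incr \<gamma> t p \<Longrightarrow> E p q \<Longrightarrow> \<bar>L p t - L q t\<bar> \<le> 1 \<Longrightarrow> L p t \<le> L q t"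
  using enabled_not_ahead[OF M_ge_3 clock_eq_lifted_mod clock_eq_lifted_mod _ incr_step(1)]
    edge_in_V by blast

lemma lifted_edge: "E p q \<Longrightarrow> \<bar>L p t - L q t\<bar> \<le> 1"
proof (induction t arbitrary: p q)
  case 0
  then show ?case using lifted_edge_init by blast
next
  case (Suc t)
  have sym: "E q p" using graph Suc.prems by (auto simp: graph_def)
  have "L p t \<le> L q t" if "incr \<gamma> t p" "\<not> incr \<gamma> t q"
    using incr_not_ahead[OF that(1) Suc.prems Suc.IH[OF Suc.prems]] .
  moreover have "L q t \<le> L p t" if "incr \<gamma> t q" "\<not> incr \<gamma> t p"
    using incr_not_ahead[OF that(1) sym Suc.IH[OF sym]] .
  ultimately show ?case using Suc.IH[OF Suc.prems] lifted_Suc[of p t] lifted_Suc[of q t] by auto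
qed

lemma neighbour_last_event_ahead:
  assumes "incr \<gamma> s p" "E p q"
  shows "L p (Suc s) - 1 \<le> L q (last_event \<gamma> q (Suc s))"
proof -
  have "L q s = L q (last_event \<gamma> q (Suc s))"
    using last_event_props(1)[of "Suc s" \<gamma> q] no_incr_after_last_event[of \<gamma> q s]
    by (intro lifted_const) auto
  moreover have "L p s \<le> L q s" using incr_not_ahead[OF assms lifted_edge[OF assms(2)]] .
  ultimately show ?thesis using lifted_Suc[of p s] assms(1) by simp
qed

lemma ball_in_Cover:
  assumes k: "k \<ge> \<gamma> 0 p0 + int (diameter V E)"
  shows "p \<in> V \<Longrightarrow> is_event \<gamma> p t \<Longrightarrow> q \<in> V \<Longrightarrow> int (hop_dist V E p q) \<le> L p t - k
    \<Longrightarrow> q \<in> Cover V E \<gamma> p t"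
proof (induction t arbitrary: p q rule: less_induct)
  case (less t)
  show ?case
  proof (cases "q = p")
    case True
    then show ?thesis using Cover_refl less.prems(1,2) by metis
  next
    case False
    then obtain n where n: "hop_dist V E p q = Suc n"
      using hop_dist_eq_0[OF connected less.prems(1,3)] by (cases "hop_dist V E p q") auto
    obtain q' where q': "E p q'" "q' \<in> V" "hop_dist V E q' q \<le> n"
      using hop_dist_next[OF connected less.prems(1,3) n] by blast
    have "L p 0 < L p t" using lifted_init_le[OF less.prems(1)] k less.prems(4) n by simp
    then obtain s where s: "t = Suc s" "incr \<gamma> s p"
      using less.prems(2) by (auto simp: is_event_def)
    define t' where "t' = last_event \<gamma> q' t"
    have t': "t' < t" "is_event \<gamma> q' t'" using last_event_props[of t \<gamma> q'] s by (auto simp: t'_def)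
    have "int (hop_dist V E q' q) \<le> L q' t' - k"
      using neighbour_last_event_ahead[OF s(2) q'(1)] less.prems(4) n q'(3) s(1) t'_def by simp
    then have "q \<in> Cover V E \<gamma> q' t'" by (rule less.IH[OF t'(1) q'(2) t'(2) less.prems(3)])
    moreover have "leadsto E \<gamma> (q', t') (p, t)"
      using s less.prems(2) q'(1) by (simp add: leadsto_def nbrs_def t'_def)
    ultimately show ?thesis using Cover_leadsto[of E \<gamma> q' t' p t V] by blast
  qed
qed

end

theorem lemma3:
  fixes V :: "'v set" and E :: "'v \<Rightarrow> 'v \<Rightarrow> bool" and M :: int
    and \<gamma> :: "nat \<Rightarrow> 'v config" and p0 p :: 'v and k :: int and t :: nat
  assumes "graph V E" and "connected_graph V E" and "card V \<ge> 2"
    and "M \<ge> 3"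
    and "execution M V E \<gamma>"
    and "WU0 M V E (\<gamma> 0)"
    and "p0 \<in> V" and "\<forall>q\<in>V. idelay M V E (\<gamma> 0) p0 q \<ge> 0"
    and "k \<ge> \<gamma> 0 p0 + int (diameter V E)"
    and "p \<in> V" and "is_event \<gamma> p t"
    and "\<exists>t'. lifted M V E \<gamma> p0 p t' = k"
    and "t \<ge> t_first M V E \<gamma> p0 p k"
  shows "ball_set V E p (lifted M V E \<gamma> p0 p t - k) \<subseteq> Cover V E \<gamma> p t"
proof -
  interpret unison_execution V E M \<gamma> p0
    using assms(1,2,4-7) by unfold_locales
  show ?thesis
    using ball_in_Cover[OF assms(9,10,11)] by (auto simp: ball_set_def)
qed

end
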